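(* In the setting of the context, at every stage $k\in\{0,\dots,K\}$ (and for every fixed sequence of observed values $f_1,\dots,f_k$) there exists a set $\{\alpha_k^i\}$ of row vectors $\alpha_k^i\in\mathbb{R}^{1\times L}$ such that $\bar{J}_k(\varpi)=\min_i[\alpha_k^i\varpi]$ for all $\varpi$ in the probability simplex, with $\{\alpha_K^i\}\triangleq\{Q_j^T\}_{j=1}^L$.
   Context: There are $L$ classes $c_1,\dots,c_L$ with class variable $\mathcal{C}$, and features $F_1,\dots,F_K$ with finitely many values, jointly distributed with $\mathcal{C}$. Let $e_k>0$ be feature evaluation costs, $Q_{ij}\geqslant 0$ misclassification costs, $Q_j=[Q_{1j},\dots,Q_{Lj}]^T$, and on the simplex $\Sigma=\{\varpi\in[0,1]^L:\sum_i\omega_i=1\}$ let $g(\varpi)=\min_{1\leqslant j\leqslant L}Q_j^T\varpi$. Let $\Delta(f_{k+1}\mid f_1,\dots,f_k)=[P(F_{k+1}=f_{k+1}\mid F_1=f_1,\dots,F_k=f_k,\mathcal{C}=c_i)]_{i=1}^L$. Define recursively $\bar{J}_K(\varpi)=g(\varpi)$ and, for $k=K-1,\dots,0$, $\bar{J}_k(\varpi)=\min[g(\varpi),\mathcal{A}_k(\varpi)]$, where $$\mathcal{A}_k(\varpi)=e_{k+1}+\sum_{f_{k+1}}\Delta^T(f_{k+1}\mid f_1,\dots,f_k)\varpi\;\bar{J}_{k+1}\!\left(\frac{\operatorname{diag}(\Delta(f_{k+1}\mid f_1,\dots,f_k))\varpi}{\Delta^T(f_{k+1}\mid f_1,\dots,f_k)\varpi}\right),$$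 the sum being over the possible values of $F_{k+1}$, $\bar{J}_{k+1}$ being the corresponding function for the history $f_1,\dots,f_{k+1}$, and a summand whose factor $\Delta^T\varpi$ equals $0$ taken to be $0$. *)

theory Defs
  imports "HOL-Probability.Probability"
begin

text \<open>Classes form a finite type 'c; feature values form a finite type 'v.
  The joint distribution of (class, feature vector [F_1,...,F_K]) is a pmf P
  on 'c \<times> 'v list.\<close>

definition prob_simplex :: "('c::finite \<Rightarrow> real) set" where
  "prob_simplex = {w. (\<forall>i. 0 \<le> w i) \<and> (\<Sum>i\<in>UNIV. w i) = 1}"

definition gfun :: "('c::finite \<Rightarrow> 'c \<Rightarrow> real) \<Rightarrow> ('c \<Rightarrow> real) \<Rightarrow> real" where
  "gfun Q w = Min ((\<lambda>j. \<Sum>i\<in>UNIV. Q i j * w i) ` UNIV)"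

text \<open>Delta P hist f c = P(F_{k+1} = f | F_1..F_k = hist, C = c), k = length hist
  (0 if the conditioning event is null).\<close>
definition Delta :: "('c \<times> 'v list) pmf \<Rightarrow> 'v list \<Rightarrow> 'v \<Rightarrow> 'c \<Rightarrow> real" where
  "Delta P hist f c =
     measure_pmf.prob P {(c', fs). c' = c \<and> take (Suc (length hist)) fs = hist @ [f]}
     / measure_pmf.prob P {(c', fs). c' = c \<and> take (length hist) fs = hist}"

text \<open>Jrem P Q e n hist = Jbar_k for the history hist of length k, where n = K - k
  is the number of remaining stages; e (k+1) is the cost of feature F_{k+1}.\<close>
fun Jrem :: "('c::finite \<times> 'v::finite list) pmf \<Rightarrow> ('c \<Rightarrow> 'c \<Rightarrow> real) \<Rightarrow> (nat \<Rightarrow> real)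
    \<Rightarrow> nat \<Rightarrow> 'v list \<Rightarrow> ('c \<Rightarrow> real) \<Rightarrow> real" where
  "Jrem P Q e 0 hist w = gfun Q w"
| "Jrem P Q e (Suc n) hist w =
     min (gfun Q w)
       (e (Suc (length hist)) +
        (\<Sum>f\<in>UNIV.
           let d = (\<Sum>i\<in>UNIV. Delta P hist f i * w i) in
           if d = 0 then 0
           else d * Jrem P Q e n (hist @ [f]) (\<lambda>i. Delta P hist f i * w i / d)))"

definition Jbar :: "('c::finite \<times> 'v::finite list) pmf \<Rightarrow> ('c \<Rightarrow> 'c \<Rightarrow> real) \<Rightarrow> (nat \<Rightarrow> real)
    \<Rightarrow> nat \<Rightarrow> 'v list \<Rightarrow> ('c \<Rightarrow> real) \<Rightarrow> real" where
  "Jbar P Q e K hist = Jrem P Q e (K - length hist) hist"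

end

theory Submission
  imports Defs
begin

text \<open>If J is a minimum of linear forms \<alpha> on the simplex, the perspective
  d J(diag(\<Delta>) \<varpi> / d) with d = \<Delta>^T \<varpi> is the minimum of the linear forms \<alpha> diag(\<Delta>), and this
  stays true at d = 0. A sum over f of such minima is the minimum over all choices of one
  form per value f; the constant e_{k+1} can be absorbed into every form since the weights sum
  to 1; and the minimum of g and the continuation cost is the minimum over the union of the
  two sets of forms.\<close>

definition dot :: "('c::finite \<Rightarrow> real) \<Rightarrow> ('c \<Rightarrow> real) \<Rightarrow> real" where
  "dot \<alpha> w = (\<Sum>i\<in>UNIV. \<alpha> i * w i)"

definition is_min_of_linear :: "('c::finite \<Rightarrow> real) set \<Rightarrow> (('c \<Rightarrow> real) \<Rightarrow> real) \<Rightarrow> bool" where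
  "is_min_of_linear A J \<longleftrightarrow>
     finite A \<and> A \<noteq> {} \<and> (\<forall>w\<in>prob_simplex. J w = Min ((\<lambda>\<alpha>. dot \<alpha> w) ` A))"

lemma Min_image_mult_left:
  fixes d :: real
  assumes "d \<ge> 0" "finite A" "A \<noteq> {}"
  shows "d * Min (g ` A) = Min ((\<lambda>a. d * g a) ` A)"
proof -
  have "mono ((*) d)" using assms(1) by (simp add: mono_def mult_left_mono)
  then have "d * Min (g ` A) = Min ((*) d ` g ` A)"
    using mono_Min_commute assms(2,3) by blast
  then show ?thesis by (simp add: image_image)
qed

lemma sum_Min_image_eq_Min_PiE:
  fixes F :: "'b \<Rightarrow> 'a \<Rightarrow> real"
  assumes S: "finite S" and fin: "\<And>f. f \<in> S \<Longrightarrow> finite (A f)"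
    and ne: "\<And>f. f \<in> S \<Longrightarrow> A f \<noteq> {}"
  shows "(\<Sum>f\<in>S. Min (F f ` A f)) = Min ((\<lambda>\<alpha>. \<Sum>f\<in>S. F f (\<alpha> f)) ` PiE S A)"
proof (rule Min_eqI[symmetric])
  show "finite ((\<lambda>\<alpha>. \<Sum>f\<in>S. F f (\<alpha> f)) ` PiE S A)"
    using S fin by (simp add: finite_PiE)
next
  fix y assume "y \<in> (\<lambda>\<alpha>. \<Sum>f\<in>S. F f (\<alpha> f)) ` PiE S A"
  then obtain \<alpha> where \<alpha>: "\<alpha> \<in> PiE S A" and y: "y = (\<Sum>f\<in>S. F f (\<alpha> f))" by blast
  have "Min (F f ` A f) \<le> F f (\<alpha> f)" if "f \<in> S" for f
    using \<alpha> fin that by (intro Min_le) auto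
  then show "(\<Sum>f\<in>S. Min (F f ` A f)) \<le> y" unfolding y by (rule sum_mono)
next
  have "\<forall>f\<in>S. \<exists>a\<in>A f. F f a = Min (F f ` A f)"
    using fin ne by (metis Min_in finite_imageI image_iff image_is_empty)
  then obtain a where a: "\<And>f. f \<in> S \<Longrightarrow> a f \<in> A f \<and> F f (a f) = Min (F f ` A f)"
    by metis
  have "restrict a S \<in> PiE S A" using a by simp
  moreover have "(\<Sum>f\<in>S. Min (F f ` A f)) = (\<Sum>f\<in>S. F f (restrict a S f))"
    using a by simp
  ultimately show "(\<Sum>f\<in>S. Min (F f ` A f)) \<in> (\<lambda>\<alpha>. \<Sum>f\<in>S. F f (\<alpha> f)) ` PiE S A"
    by blast
qed

lemma dot_const_plus_sum:
  assumes "w \<in> prob_simplex" "finite S"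
  shows "dot (\<lambda>i. E + (\<Sum>f\<in>S. \<alpha> f i)) w = E + (\<Sum>f\<in>S. dot (\<alpha> f) w)"
proof -
  have "dot (\<lambda>i. E + (\<Sum>f\<in>S. \<alpha> f i)) w = E * (\<Sum>i\<in>UNIV. w i) + (\<Sum>i\<in>UNIV. \<Sum>f\<in>S. \<alpha> f i * w i)"
    by (simp add: dot_def distrib_right sum.distrib sum_distrib_left sum_distrib_right)
  also have "\<dots> = E + (\<Sum>f\<in>S. dot (\<alpha> f) w)"
    using assms(1) by (simp add: prob_simplex_def dot_def sum.swap[of _ UNIV S])
  finally show ?thesis .
qed

lemma perspective_of_min_of_linear:
  fixes \<delta> w :: "'c::finite \<Rightarrow> real"
  assumes \<delta>: "\<And>i. 0 \<le> \<delta> i" and w: "\<And>i. 0 \<le> w i" and J: "is_min_of_linear A J"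
  shows "(let d = (\<Sum>i\<in>UNIV. \<delta> i * w i) in if d = 0 then 0 else d * J (\<lambda>i. \<delta> i * w i / d))
    = Min ((\<lambda>\<alpha>. dot (\<lambda>i. \<alpha> i * \<delta> i) w) ` A)"
proof -
  define d where "d = (\<Sum>i\<in>UNIV. \<delta> i * w i)"
  have A: "finite A" "A \<noteq> {}" using J by (simp_all add: is_min_of_linear_def)
  have nonneg: "\<And>i. 0 \<le> \<delta> i * w i" using \<delta> w by simp
  show ?thesis
  proof (cases "d = 0")
    case True
    then have vanish: "\<And>i. \<delta> i * w i = 0"
      unfolding d_def using nonneg by (simp add: sum_nonneg_eq_0_iff)
    have "\<And>\<alpha>. dot (\<lambda>i. \<alpha> i * \<delta> i) w = 0"
      by (simp add: dot_def mult.assoc vanish del: mult_eq_0_iff)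
    then have "(\<lambda>\<alpha>. dot (\<lambda>i. \<alpha> i * \<delta> i) w) ` A = {0}"
      using A by auto
    then show ?thesis using True by (simp add: d_def[symmetric])
  next
    case False
    then have d: "d > 0" unfolding d_def using nonneg by (simp add: sum_nonneg order_less_le)
    define w' where "w' = (\<lambda>i. \<delta> i * w i / d)"
    have "w' \<in> prob_simplex"
      using nonneg d by (simp add: prob_simplex_def w'_def d_def sum_divide_distrib[symmetric])
    then have "d * J w' = Min ((\<lambda>\<alpha>. d * dot \<alpha> w') ` A)"
      using J A d Min_image_mult_left[of d] by (simp add: is_min_of_linear_def)
    also have "(\<lambda>\<alpha>. d * dot \<alpha> w') = (\<lambda>\<alpha>. dot (\<lambda>i. \<alpha> i * \<delta> i) w)"
      using d by (auto simp: dot_def w'_def sum_distrib_left intro!: ext sum.cong)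
    finally show ?thesis using False by (simp add: d_def[symmetric] w'_def)
  qed
qed

lemma Delta_nonneg: "Delta P hist f c \<ge> 0"
  by (simp add: Delta_def)

lemma gfun_min_of_linear: "is_min_of_linear ((\<lambda>j i. Q i j) ` UNIV) (gfun Q)"
  by (simp add: is_min_of_linear_def gfun_def dot_def image_image)

lemma Jrem_Suc_min_of_linear:
  fixes P :: "('c::finite \<times> 'v::finite list) pmf"
  assumes Af: "\<And>f. is_min_of_linear (Af f) (Jrem P Q e n (hist @ [f]))"
  shows "is_min_of_linear
    ((\<lambda>j i. Q i j) ` UNIV \<union>
     (\<lambda>\<alpha> i. e (Suc (length hist)) + (\<Sum>f\<in>UNIV. \<alpha> f i * Delta P hist f i)) ` PiE UNIV Af)
    (Jrem P Q e (Suc n) hist)"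
    (is "is_min_of_linear (?G \<union> ?B) _")
proof -
  have fin: "\<And>f. finite (Af f)" and ne: "\<And>f. Af f \<noteq> {}"
    using Af by (simp_all add: is_min_of_linear_def)
  then have PiE: "finite (PiE UNIV Af)" "PiE UNIV Af \<noteq> {}"
    by (simp_all add: finite_PiE PiE_eq_empty_iff)
  have "Jrem P Q e (Suc n) hist w = Min ((\<lambda>\<alpha>. dot \<alpha> w) ` (?G \<union> ?B))"
    if w: "w \<in> prob_simplex" for w
  proof -
    have w0: "\<And>i. 0 \<le> w i" using w by (simp add: prob_simplex_def)
    let ?E = "e (Suc (length hist))"
    have "?E + (\<Sum>f\<in>UNIV. let d = (\<Sum>i\<in>UNIV. Delta P hist f i * w i) in
             if d = 0 then 0 else d * Jrem P Q e n (hist @ [f]) (\<lambda>i. Delta P hist f i * w i / d))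
        = ?E + (\<Sum>f\<in>UNIV. Min ((\<lambda>\<alpha>. dot (\<lambda>i. \<alpha> i * Delta P hist f i) w) ` Af f))"
      by (simp add: perspective_of_min_of_linear[OF _ w0 Af] Delta_nonneg)
    also have "\<dots> = Min ((\<lambda>\<alpha>. ?E + (\<Sum>f\<in>UNIV. dot (\<lambda>i. \<alpha> f i * Delta P hist f i) w)) ` PiE UNIV Af)"
      using sum_Min_image_eq_Min_PiE[where S = UNIV and A = Af
          and F = "\<lambda>f \<alpha>. dot (\<lambda>i. \<alpha> i * Delta P hist f i) w"] fin ne
        Min_add_commute[OF PiE, of "\<lambda>\<alpha>. \<Sum>f\<in>UNIV. dot (\<lambda>i. \<alpha> f i * Delta P hist f i) w" ?E]
      by (simp add: add.commute)
    also have "\<dots> = Min ((\<lambda>\<alpha>. dot \<alpha> w) ` ?B)"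
      by (simp add: dot_const_plus_sum[OF w] image_image)
    finally show ?thesis
      using fin PiE gfun_min_of_linear[of Q] w
      by (simp add: is_min_of_linear_def image_Un Min_Un)
  qed
  then show ?thesis
    using PiE by (simp add: is_min_of_linear_def)
qed

lemma Jrem_min_of_linear:
  fixes P :: "('c::finite \<times> 'v::finite list) pmf"
  shows "\<exists>A. is_min_of_linear A (Jrem P Q e n hist)"
proof (induction n arbitrary: hist)
  case 0
  show ?case using gfun_min_of_linear by auto
next
  case (Suc n)
  then have "\<forall>f. \<exists>A. is_min_of_linear A (Jrem P Q e n (hist @ [f]))" by blast
  from choice[OF this] obtain Af where "\<forall>f. is_min_of_linear (Af f) (Jrem P Q e n (hist @ [f]))"
    by blast
  then show ?case using Jrem_Suc_min_of_linear by blast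
qed

theorem theorem2:
  fixes P :: "('c::finite \<times> 'v::finite list) pmf"
    and Q :: "'c \<Rightarrow> 'c \<Rightarrow> real" and e :: "nat \<Rightarrow> real" and K :: nat
  assumes "\<And>c fs. (c, fs) \<in> set_pmf P \<Longrightarrow> length fs = K"
    and "\<And>k. 1 \<le> k \<Longrightarrow> k \<le> K \<Longrightarrow> e k > 0"
    and "\<And>i j. Q i j \<ge> 0"
  shows "\<forall>hist :: 'v list. length hist \<le> K \<longrightarrow>
           (\<exists>A :: ('c \<Rightarrow> real) set. finite A \<and> A \<noteq> {} \<and>
              (length hist = K \<longrightarrow> A = (\<lambda>j i. Q i j) ` UNIV) \<and>
              (\<forall>w\<in>prob_simplex. Jbar P Q e K hist w = Min ((\<lambda>\<alpha>. \<Sum>i\<in>UNIV. \<alpha> i * w i) ` A)))"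
proof (intro allI impI)
  fix hist :: "'v list"
  assume "length hist \<le> K"
  obtain A where A: "is_min_of_linear A (Jbar P Q e K hist)"
    and terminal: "length hist = K \<Longrightarrow> A = (\<lambda>j i. Q i j) ` UNIV"
  proof (cases "length hist = K")
    case True
    then have "Jbar P Q e K hist = gfun Q" by (simp add: Jbar_def fun_eq_iff)
    then show ?thesis using that[of "(\<lambda>j i. Q i j) ` UNIV"] gfun_min_of_linear[of Q] by simp
  next
    case False
    then show ?thesis using that Jrem_min_of_linear by (metis Jbar_def)
  qed
  then show "\<exists>A :: ('c \<Rightarrow> real) set. finite A \<and> A \<noteq> {} \<and>
              (length hist = K \<longrightarrow> A = (\<lambda>j i. Q i j) ` UNIV) \<and>
              (\<forall>w\<in>prob_simplex. Jbar P Q e K hist w = Min ((\<lambda>\<alpha>. \<Sum>i\<in>UNIV. \<alpha> i * w i) ` A))"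
    by (auto simp: is_min_of_linear_def dot_def)
qed

end
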